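(* Let $\Omega\subset\mathbb{R}^n$ be a domain with $\mathrm{width}(\Omega)<+\infty$, $f\in L^\infty(\Omega)$, $g\in C(\partial\Omega)\cap L^\infty(\partial\Omega)$, $(\varepsilon_i)$ a sequence of positive numbers with $\varepsilon_i\to0$, and for each $i$ let $u_i:\overline\Omega\to\mathbb{R}$ be a bounded solution of $\Delta^{\varepsilon_i}_\infty u_i=\varepsilon_i^2 f$ in $\Omega$, $u_i=g$ on $\partial\Omega$. Then for every $r>0$ there exist $N\in\mathbb{N}$ and a constant $C_r$ (depending on $r$, $\|g\|_\infty$ and $\|f\|_\infty$, but not on $i$) such that for all $i>N$ and all $x,y\in\Omega_r$ with $d(x,y)<\varepsilon_i$, \[ |u_i(x)-u_i(y)|\le C_r\varepsilon_i. \]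
   Context: $d(x,y)$ is the intrinsic metric of $\overline\Omega$ (infimum of lengths of paths in $\overline\Omega$ from $x$ to $y$); $\mathrm{width}(\Omega)=\sup_{x\in\Omega}\inf_{y\in\partial\Omega}d(y,x)$; $\Omega_r=\{x\in\Omega:\ \inf_{y\in\partial\Omega}d(x,y)>r\}$. For $\varepsilon>0$, $B_x(\varepsilon)=\{y\in\overline\Omega: d(x,y)<\varepsilon\}$ and $\Delta^{\varepsilon}_\infty w(x)=\inf_{y\in B_x(\varepsilon)}w(y)+\sup_{y\in B_x(\varepsilon)}w(y)-2w(x)$. *)

theory Defs
  imports "HOL-Analysis.Analysis"
begin

definition path_length :: "(real \<Rightarrow> 'a::metric_space) \<Rightarrow> ereal" where
  "path_length \<gamma> =
     (SUP tk \<in> {(t :: nat \<Rightarrow> real, k :: nat). t 0 = 0 \<and> t k = 1 \<and> (\<forall>j<k. t j \<le> t (Suc j))}.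
        ereal (\<Sum>j<snd tk. dist (\<gamma> (fst tk j)) (\<gamma> (fst tk (Suc j)))))"

definition intrinsic_dist :: "'a::euclidean_space set \<Rightarrow> 'a \<Rightarrow> 'a \<Rightarrow> ereal" where
  "intrinsic_dist \<Omega> x y =
     (INF \<gamma> \<in> {\<gamma>. path \<gamma> \<and> path_image \<gamma> \<subseteq> closure \<Omega> \<and> pathstart \<gamma> = x \<and> pathfinish \<gamma> = y}.
        path_length \<gamma>)"

definition dist_to_boundary :: "'a::euclidean_space set \<Rightarrow> 'a \<Rightarrow> ereal" where
  "dist_to_boundary \<Omega> x = (INF y \<in> frontier \<Omega>. intrinsic_dist \<Omega> y x)"

definition width :: "'a::euclidean_space set \<Rightarrow> ereal" where
  "width \<Omega> = (SUP x \<in> \<Omega>. dist_to_boundary \<Omega> x)"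

definition inner_set :: "'a::euclidean_space set \<Rightarrow> real \<Rightarrow> 'a set" where
  "inner_set \<Omega> r = {x \<in> \<Omega>. (INF y \<in> frontier \<Omega>. intrinsic_dist \<Omega> x y) > ereal r}"

definition intr_ball :: "'a::euclidean_space set \<Rightarrow> 'a \<Rightarrow> real \<Rightarrow> 'a set" where
  "intr_ball \<Omega> x \<epsilon> = {y \<in> closure \<Omega>. intrinsic_dist \<Omega> x y < ereal \<epsilon>}"

definition eps_inf_laplacian ::
    "'a::euclidean_space set \<Rightarrow> real \<Rightarrow> ('a \<Rightarrow> real) \<Rightarrow> 'a \<Rightarrow> real" where
  "eps_inf_laplacian \<Omega> \<epsilon> w x =
     (INF y \<in> intr_ball \<Omega> x \<epsilon>. w y) + (SUP y \<in> intr_ball \<Omega> x \<epsilon>. w y) - 2 * w x"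

end

(*
  Let w be bounded with Delta^eps_inf w >= -eps^2 F in Omega; a solution with |f| <= F gives this for
  both u_i and -u_i.

  Uniform bound: with d the distance to the boundary and a = 2 width + 4, the barrier
  G + (F + 1) (a d - d^2) is a strict eps-supersolution at points farther than eps from the boundary,
  because there one can step almost eps towards the boundary inside B_x(eps). Hence approximate
  maxima of w minus the barrier lie within eps of the boundary, where a boundary point of B_x(eps)
  controls them through the boundary data.

  Interior oscillation: write ascent z = sup over B_z(eps) of w, minus w z. Starting from x with
  dist(x, boundary) > r, jump k ~ r / eps times to an almost maximiser of w in the current ball.
  The equation at the new point (whose ball contains the previous one) shows that the ascent drops by at
  most eps^2 F per jump, while w grows by the ascent; so k ascent(x) - k^2 eps^2 F <= 2 sup |w| + eps,
  i.e. ascent(x) = O(eps). The equation also bounds w x - inf over B_x(eps) of w by ascent(x) + eps^2 F.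
*)

theory Submission
  imports Defs
begin

section \<open>Intrinsic distance and intrinsic balls\<close>

lemma dist_le_path_length: "ereal (dist (pathstart \<gamma>) (pathfinish \<gamma>)) \<le> path_length \<gamma>"
  unfolding path_length_def pathstart_def pathfinish_def
proof (rule SUP_upper2)
  show "(\<lambda>j::nat. if j = 0 then 0 else 1 :: real, 1 :: nat)
    \<in> {(t, k). t 0 = 0 \<and> t k = 1 \<and> (\<forall>j<k. t j \<le> t (Suc j))}"
    by simp
qed simp

lemma path_length_linepath_le: "path_length (linepath a b) \<le> ereal (dist a b)"
  unfolding path_length_def
proof (rule SUP_least, clarify, unfold fst_conv snd_conv)
  fix t :: "nat \<Rightarrow> real" and k
  assume t: "t 0 = 0" "t k = 1" "\<forall>j<k. t j \<le> t (Suc j)"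
  have dist_linepath: "dist (linepath a b s) (linepath a b s') = \<bar>s - s'\<bar> * dist a b" for s s'
  proof -
    have "linepath a b s - linepath a b s' = (s' - s) *\<^sub>R (a - b)"
      unfolding linepath_def by (simp add: algebra_simps)
    then show ?thesis by (simp add: dist_norm abs_minus_commute)
  qed
  have "(\<Sum>j<k. dist (linepath a b (t j)) (linepath a b (t (Suc j))))
      = (\<Sum>j<k. t (Suc j) - t j) * dist a b"
    using t(3) by (simp add: dist_linepath sum_distrib_right)
  also have "\<dots> = dist a b" by (simp add: sum_lessThan_telescope t)
  finally show "ereal (\<Sum>j<k. dist (linepath a b (t j)) (linepath a b (t (Suc j))))
      \<le> ereal (dist a b)" by simp
qed

lemma dist_le_intrinsic_dist: "ereal (dist x y) \<le> intrinsic_dist \<Omega> x y"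
  unfolding intrinsic_dist_def by (rule INF_greatest) (use dist_le_path_length in fastforce)

lemma intrinsic_dist_le_dist:
  "closed_segment x y \<subseteq> closure \<Omega> \<Longrightarrow> intrinsic_dist \<Omega> x y \<le> ereal (dist x y)"
  unfolding intrinsic_dist_def
  by (rule INF_lower2[of "linepath x y"]) (auto simp: path_length_linepath_le)

lemma intr_ball_subset_closure: "intr_ball \<Omega> x e \<subseteq> closure \<Omega>"
  by (auto simp: intr_ball_def)

lemma intr_ball_subset_ball: "intr_ball \<Omega> x e \<subseteq> ball x e"
proof
  fix y assume "y \<in> intr_ball \<Omega> x e"
  then have "intrinsic_dist \<Omega> x y < ereal e" by (simp add: intr_ball_def)
  with dist_le_intrinsic_dist have "ereal (dist x y) < ereal e" by (rule le_less_trans)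
  then show "y \<in> ball x e" by simp
qed

lemma center_in_intr_ball: "x \<in> closure \<Omega> \<Longrightarrow> 0 < e \<Longrightarrow> x \<in> intr_ball \<Omega> x e"
  using intrinsic_dist_le_dist[of x x \<Omega>] by (simp add: intr_ball_def le_less_trans)

lemma bdd_above_intr_ball:
  fixes w :: "'a::euclidean_space \<Rightarrow> real"
  shows "bounded (w ` closure \<Omega>) \<Longrightarrow> bdd_above (w ` intr_ball \<Omega> x e)"
  by (meson bdd_above_mono bounded_imp_bdd_above image_mono intr_ball_subset_closure)

lemma bdd_below_intr_ball:
  fixes w :: "'a::euclidean_space \<Rightarrow> real"
  shows "bounded (w ` closure \<Omega>) \<Longrightarrow> bdd_below (w ` intr_ball \<Omega> x e)"
  by (meson bdd_below_mono bounded_imp_bdd_below image_mono intr_ball_subset_closure)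

lemma eps_inf_laplacian_uminus:
  fixes w :: "'a::euclidean_space \<Rightarrow> real"
  assumes "bounded (w ` closure \<Omega>)" "x \<in> closure \<Omega>" "0 < e"
  shows "eps_inf_laplacian \<Omega> e (\<lambda>y. - w y) x = - eps_inf_laplacian \<Omega> e w x"
proof -
  have ne: "intr_ball \<Omega> x e \<noteq> {}" using center_in_intr_ball assms(2,3) by blast
  show ?thesis
    unfolding eps_inf_laplacian_def
    using uminus_cSUP[OF bdd_above_intr_ball[OF assms(1)] ne]
      uminus_cINF[OF bdd_below_intr_ball[OF assms(1)] ne]
    by linarith
qed

lemma ball_infdist_frontier_subset:
  fixes \<Omega> :: "'a::euclidean_space set"
  assumes "x \<in> \<Omega>"
  shows "ball x (infdist x (frontier \<Omega>)) \<subseteq> \<Omega>"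
proof
  fix z assume z: "z \<in> ball x (infdist x (frontier \<Omega>))"
  show "z \<in> \<Omega>"
  proof (rule ccontr)
    assume "z \<notin> \<Omega>"
    then obtain b where b: "b \<in> closed_segment x z" "b \<in> frontier \<Omega>"
      using connected_Int_frontier[of "closed_segment x z" \<Omega>] assms by blast
    then have "infdist x (frontier \<Omega>) \<le> dist x z"
      using infdist_le[OF b(2), of x] dist_in_closed_segment[OF b(1)] by (simp add: dist_commute)
    with z show False by simp
  qed
qed

lemma cball_infdist_frontier_subset_closure:
  fixes \<Omega> :: "'a::euclidean_space set"
  assumes "x \<in> \<Omega>"
  shows "cball x (infdist x (frontier \<Omega>)) \<subseteq> closure \<Omega>"
proof (cases "infdist x (frontier \<Omega>) = 0")
  case True
  then show ?thesis using assms closure_subset by auto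
next
  case False
  then have "0 < infdist x (frontier \<Omega>)" using infdist_nonneg by (simp add: order_less_le)
  then have "cball x (infdist x (frontier \<Omega>)) = closure (ball x (infdist x (frontier \<Omega>)))"
    by simp
  also have "\<dots> \<subseteq> closure \<Omega>" by (rule closure_mono[OF ball_infdist_frontier_subset[OF assms]])
  finally show ?thesis .
qed

lemma intrinsic_dist_le_dist_in_cball:
  fixes \<Omega> :: "'a::euclidean_space set"
  assumes "x \<in> \<Omega>" "y \<in> cball x (infdist x (frontier \<Omega>))" "z \<in> cball x (infdist x (frontier \<Omega>))"
  shows "intrinsic_dist \<Omega> y z \<le> ereal (dist y z)"
  using assms cball_infdist_frontier_subset_closure[OF assms(1)]
  by (intro intrinsic_dist_le_dist) (meson closed_segment_subset convex_cball order_trans)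

lemma mem_intr_ball_in_cball:
  fixes \<Omega> :: "'a::euclidean_space set"
  assumes "x \<in> \<Omega>" "y \<in> cball x (infdist x (frontier \<Omega>))" "z \<in> cball x (infdist x (frontier \<Omega>))"
    and "dist y z < e"
  shows "z \<in> intr_ball \<Omega> y e"
  using intrinsic_dist_le_dist_in_cball[OF assms(1-3)] cball_infdist_frontier_subset_closure[OF assms(1)]
    assms(3,4) by (auto simp: intr_ball_def intro: le_less_trans)

lemma infdist_frontier_gt_if_inner_set:
  fixes \<Omega> :: "'a::euclidean_space set"
  assumes "frontier \<Omega> \<noteq> {}" "x \<in> inner_set \<Omega> r"
  shows "r < infdist x (frontier \<Omega>)"
proof -
  obtain b where b: "b \<in> frontier \<Omega>" "infdist x (frontier \<Omega>) = dist x b"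
    using infdist_attains_inf[OF frontier_closed assms(1)] by blast
  have "ereal r < (INF y\<in>frontier \<Omega>. intrinsic_dist \<Omega> x y)"
    using assms(2) by (simp add: inner_set_def)
  also have "\<dots> \<le> intrinsic_dist \<Omega> x b" using b(1) by (rule INF_lower)
  also have "\<dots> \<le> ereal (dist x b)"
    using assms(2) b by (intro intrinsic_dist_le_dist_in_cball) (auto simp: inner_set_def)
  finally show ?thesis using b(2) by simp
qed

lemma infdist_frontier_le_width:
  fixes \<Omega> :: "'a::euclidean_space set"
  assumes "x \<in> \<Omega>"
  shows "ereal (infdist x (frontier \<Omega>)) \<le> width \<Omega>"
proof -
  have "ereal (infdist x (frontier \<Omega>)) \<le> ereal (dist b x)" if "b \<in> frontier \<Omega>" for b
    using infdist_le[OF that, of x] dist_commute[of b x] by simp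
  then have "ereal (infdist x (frontier \<Omega>)) \<le> dist_to_boundary \<Omega> x"
    unfolding dist_to_boundary_def by (meson INF_greatest dist_le_intrinsic_dist order_trans)
  also have "\<dots> \<le> width \<Omega>" unfolding width_def using assms by (rule SUP_upper)
  finally show ?thesis .
qed

lemma infdist_frontier_bounded_if_width_finite:
  fixes \<Omega> :: "'a::euclidean_space set"
  assumes "\<Omega> \<noteq> {}" "width \<Omega> < \<infinity>"
  obtains W where "frontier \<Omega> \<noteq> {}" "\<And>x. x \<in> \<Omega> \<Longrightarrow> infdist x (frontier \<Omega>) \<le> W"
proof -
  have "frontier \<Omega> \<noteq> {}"
  proof
    assume "frontier \<Omega> = {}"
    then have "width \<Omega> = \<infinity>"
      using assms(1) by (simp add: width_def dist_to_boundary_def top_ereal_def)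
    with assms(2) show False by simp
  qed
  moreover obtain W where "width \<Omega> = ereal W"
    using assms infdist_frontier_le_width by (cases "width \<Omega>") fastforce+
  ultimately show ?thesis using that infdist_frontier_le_width by (metis ereal_less_eq(3))
qed

lemma infdist_frontier_intr_ball_less:
  "y \<in> intr_ball \<Omega> x e \<Longrightarrow> infdist y (frontier \<Omega>) < infdist x (frontier \<Omega>) + e"
  using intr_ball_subset_ball[of \<Omega> x e] infdist_triangle[of y "frontier \<Omega>" x]
  by (force simp: dist_commute)

lemma exists_intr_ball_point_closer_to_frontier:
  fixes \<Omega> :: "'a::euclidean_space set"
  assumes "frontier \<Omega> \<noteq> {}" "x \<in> \<Omega>" "0 \<le> s" "s \<le> infdist x (frontier \<Omega>)" "s < e"
  obtains y where "y \<in> intr_ball \<Omega> x e" "infdist y (frontier \<Omega>) \<le> infdist x (frontier \<Omega>) - s"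
proof -
  define d where "d = infdist x (frontier \<Omega>)"
  obtain b where b: "b \<in> frontier \<Omega>" "d = dist x b"
    using infdist_attains_inf[OF frontier_closed assms(1)] unfolding d_def by blast
  \<comment> \<open>If d = 0 then s = 0, and s / d = 0 gives y = x.\<close>
  define y where "y = x + (s / d) *\<^sub>R (b - x)"
  have sd: "s / d * d = s" "(1 - s / d) * d = d - s"
    using assms(3,4) by (auto simp: d_def field_simps)
  have d0: "0 \<le> d" by (simp add: d_def infdist_nonneg)
  have "dist x y = \<bar>s / d\<bar> * d" by (simp add: y_def dist_norm b(2) norm_minus_commute)
  also have "\<bar>s / d\<bar> = s / d" using d0 assms(3) by simp
  finally have "dist x y = s" using sd(1) by simp
  then have "y \<in> intr_ball \<Omega> x e"
    using assms(2,4,5) d0 by (intro mem_intr_ball_in_cball[of x]) (auto simp: d_def)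
  have "b - y = (1 - s / d) *\<^sub>R (b - x)" by (simp add: y_def algebra_simps)
  then have "dist y b = \<bar>1 - s / d\<bar> * d" by (simp add: dist_norm b(2) norm_minus_commute)
  also have "\<bar>1 - s / d\<bar> = 1 - s / d"
    using d0 assms(4) by (cases "d = 0") (simp_all add: d_def divide_le_eq_1)
  finally have "dist y b = d - s" using sd(2) by simp
  then have "infdist y (frontier \<Omega>) \<le> d - s" using infdist_le[OF b(1), of y] by simp
  with \<open>y \<in> intr_ball \<Omega> x e\<close> show ?thesis using that unfolding d_def by blast
qed

section \<open>Interior oscillation of eps-subsolutions\<close>

locale eps_subsolution =
  fixes \<Omega> :: "'a::euclidean_space set" and \<epsilon> F :: real and w :: "'a \<Rightarrow> real"
  assumes eps_pos: "0 < \<epsilon>" and F_nonneg: "0 \<le> F"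
    and bounded_w: "bounded (w ` closure \<Omega>)"
    and laplacian_ge: "\<And>x. x \<in> \<Omega> \<Longrightarrow> - \<epsilon>\<^sup>2 * F \<le> eps_inf_laplacian \<Omega> \<epsilon> w x"
begin

definition ascent :: "'a \<Rightarrow> real" where
  "ascent x = (SUP y\<in>intr_ball \<Omega> x \<epsilon>. w y) - w x"

lemma le_SUP_intr_ball: "y \<in> intr_ball \<Omega> x \<epsilon> \<Longrightarrow> w y \<le> (SUP z\<in>intr_ball \<Omega> x \<epsilon>. w z)"
  by (rule cSUP_upper[OF _ bdd_above_intr_ball[OF bounded_w]])

lemma INF_intr_ball_le: "y \<in> intr_ball \<Omega> x \<epsilon> \<Longrightarrow> (INF z\<in>intr_ball \<Omega> x \<epsilon>. w z) \<le> w y"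
  by (rule cINF_lower[OF bdd_below_intr_ball[OF bounded_w]])

lemma drop_le_ascent:
  assumes "x \<in> \<Omega>" "y \<in> intr_ball \<Omega> x \<epsilon>"
  shows "w x - w y \<le> ascent x + \<epsilon>\<^sup>2 * F"
  using laplacian_ge[OF assms(1)] INF_intr_ball_le[OF assms(2)]
  unfolding eps_inf_laplacian_def ascent_def by linarith

lemma rise_le_ascent: "y \<in> intr_ball \<Omega> x \<epsilon> \<Longrightarrow> w y - w x \<le> ascent x"
  using le_SUP_intr_ball unfolding ascent_def by (simp add: algebra_simps)

lemma ascent_step:
  assumes x: "x \<in> \<Omega>" and z: "z \<in> \<Omega>" "dist x z + \<epsilon> \<le> infdist x (frontier \<Omega>)" and "0 < \<delta>"
  obtains y where "y \<in> \<Omega>" "dist z y < \<epsilon>"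
    "ascent z - \<delta> - \<epsilon>\<^sup>2 * F \<le> ascent y" "w z + ascent z - \<delta> \<le> w y"
proof -
  have ne: "intr_ball \<Omega> z \<epsilon> \<noteq> {}" using center_in_intr_ball z(1) closure_subset eps_pos by blast
  have "w z + ascent z - \<delta> < (SUP y\<in>intr_ball \<Omega> z \<epsilon>. w y)"
    using \<open>0 < \<delta>\<close> by (simp add: ascent_def)
  then obtain y where y: "y \<in> intr_ball \<Omega> z \<epsilon>" "w z + ascent z - \<delta> < w y"
    using less_cSUP_iff[OF ne bdd_above_intr_ball[OF bounded_w]] by blast
  have zy: "dist z y < \<epsilon>" using y(1) intr_ball_subset_ball[of \<Omega> z \<epsilon>] by auto
  then have xy: "dist x y < infdist x (frontier \<Omega>)" using z(2) dist_triangle[of x y z] by linarith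
  then have "y \<in> \<Omega>" using ball_infdist_frontier_subset[OF x] by auto
  moreover have "z \<in> intr_ball \<Omega> y \<epsilon>"
  proof (rule mem_intr_ball_in_cball[OF x])
    show "y \<in> cball x (infdist x (frontier \<Omega>))" "z \<in> cball x (infdist x (frontier \<Omega>))"
      using xy z(2) eps_pos by auto
    show "dist y z < \<epsilon>" using zy by (simp add: dist_commute)
  qed
  ultimately have "w y - w z \<le> ascent y + \<epsilon>\<^sup>2 * F" by (rule drop_le_ascent)
  with y(2) have "ascent z - \<delta> - \<epsilon>\<^sup>2 * F \<le> ascent y" by simp
  with that \<open>y \<in> \<Omega>\<close> zy y(2) show ?thesis by simp
qed

lemma ascending_chain:
  assumes x: "x \<in> \<Omega>" and k: "real k * \<epsilon> \<le> infdist x (frontier \<Omega>)" and "0 < \<delta>"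
  obtains z where "z \<in> \<Omega>" "w x + real k * ascent x - (real k)\<^sup>2 * (\<delta> + \<epsilon>\<^sup>2 * F) \<le> w z"
proof -
  define c where "c = \<delta> + \<epsilon>\<^sup>2 * F"
  have c: "\<delta> \<le> c" using F_nonneg by (simp add: c_def)
  have "\<exists>z\<in>\<Omega>. dist x z \<le> real j * \<epsilon> \<and> ascent x - real j * c \<le> ascent z
      \<and> w x + real j * ascent x - (real j)\<^sup>2 * c \<le> w z" if "j \<le> k" for j
    using that
  proof (induction j)
    case 0
    show ?case using x by auto
  next
    case (Suc j)
    then obtain z where z: "z \<in> \<Omega>" "dist x z \<le> real j * \<epsilon>" "ascent x - real j * c \<le> ascent z"
      "w x + real j * ascent x - (real j)\<^sup>2 * c \<le> w z"
      by (meson Suc_leD)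
    have "real j * \<epsilon> + \<epsilon> \<le> real k * \<epsilon>"
      using Suc.prems eps_pos mult_right_mono[of "real (Suc j)" k \<epsilon>] by (simp add: algebra_simps)
    then have "dist x z + \<epsilon> \<le> infdist x (frontier \<Omega>)" using z(2) k by linarith
    then obtain y where y: "y \<in> \<Omega>" "dist z y < \<epsilon>"
      "ascent z - \<delta> - \<epsilon>\<^sup>2 * F \<le> ascent y" "w z + ascent z - \<delta> \<le> w y"
      using ascent_step[OF x z(1) _ \<open>0 < \<delta>\<close>] by blast
    have Suc_j: "real (Suc j) * a = real j * a + a"
      "(real (Suc j))\<^sup>2 * a = (real j)\<^sup>2 * a + 2 * (real j * a) + a" for a :: real
      by (simp_all add: power2_eq_square algebra_simps)
    have "0 \<le> real j * c" using c \<open>0 < \<delta>\<close> by simp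
    then have "dist x y \<le> real (Suc j) * \<epsilon>" "ascent x - real (Suc j) * c \<le> ascent y"
      "w x + real (Suc j) * ascent x - (real (Suc j))\<^sup>2 * c \<le> w y"
      using dist_triangle[of x y z] z(2-4) y(2-4) c unfolding Suc_j c_def by linarith+
    then show ?case using y(1) by blast
  qed
  from this[of k] show ?thesis using that unfolding c_def by blast
qed

lemma ascent_le_of_nat:
  assumes x: "x \<in> \<Omega>" and k: "1 \<le> k" "real k * \<epsilon> \<le> infdist x (frontier \<Omega>)"
    and M: "\<And>z. z \<in> closure \<Omega> \<Longrightarrow> \<bar>w z\<bar> \<le> M"
  shows "ascent x \<le> (2 * M + \<epsilon>) / k + k * \<epsilon>\<^sup>2 * F"
proof -
  have k2: "(real k)\<^sup>2 * (\<epsilon> / (real k)\<^sup>2) = \<epsilon>" using k(1) by simp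
  obtain z where z: "z \<in> \<Omega>"
    "w x + real k * ascent x - (real k)\<^sup>2 * (\<epsilon> / (real k)\<^sup>2 + \<epsilon>\<^sup>2 * F) \<le> w z"
    using ascending_chain[OF x k(2), of "\<epsilon> / (real k)\<^sup>2"] eps_pos k(1) by auto
  have "w z - w x \<le> 2 * M" using M[of z] M[of x] x z(1) closure_subset by (force simp: abs_le_iff)
  then have "real k * ascent x \<le> 2 * M + \<epsilon> + (real k)\<^sup>2 * \<epsilon>\<^sup>2 * F"
    using z(2) k2 by (simp add: algebra_simps)
  then show ?thesis using k(1) by (simp add: field_simps power2_eq_square)
qed

lemma ascent_le:
  assumes x: "x \<in> \<Omega>" and r: "2 * \<epsilon> \<le> r" "r \<le> infdist x (frontier \<Omega>)"
    and M: "\<And>z. z \<in> closure \<Omega> \<Longrightarrow> \<bar>w z\<bar> \<le> M"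
  shows "ascent x \<le> \<epsilon> * (4 * M / r + r * F + 1)"
proof -
  define k where "k = nat \<lfloor>r / \<epsilon>\<rfloor>"
  have "2 \<le> r / \<epsilon>" using r(1) eps_pos by (simp add: field_simps)
  then have k: "r / \<epsilon> - 1 < k" "k \<le> r / \<epsilon>" by (simp_all add: k_def)
  then have "1 < real k" using \<open>2 \<le> r / \<epsilon>\<close> by linarith
  then have k1: "1 \<le> k" by simp
  have kr: "real k * \<epsilon> \<le> r" and rk: "r \<le> 2 * real k * \<epsilon>"
    using k \<open>2 \<le> r / \<epsilon>\<close> eps_pos by (simp_all add: field_simps)
  have M0: "0 \<le> M" using M[of x] x closure_subset by force
  have "1 / real k \<le> 2 * \<epsilon> / r" using k1 rk r(1) eps_pos by (simp add: field_simps)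
  then have "(2 * M + \<epsilon>) / k \<le> (2 * M + \<epsilon>) * (2 * \<epsilon> / r)"
    using M0 eps_pos mult_left_mono[of "1 / real k" "2 * \<epsilon> / r" "2 * M + \<epsilon>"] by simp
  also have "\<dots> \<le> \<epsilon> * (4 * M / r) + \<epsilon>"
    using r(1) eps_pos by (simp add: field_simps)
  finally have "(2 * M + \<epsilon>) / k \<le> \<epsilon> * (4 * M / r) + \<epsilon>" .
  moreover have "k * \<epsilon>\<^sup>2 * F \<le> \<epsilon> * (r * F)"
    using kr eps_pos F_nonneg mult_right_mono[OF kr, of "\<epsilon> * F"] by (simp add: power2_eq_square algebra_simps)
  ultimately show ?thesis
    using ascent_le_of_nat[OF x k1 order_trans[OF kr r(2)] M] by (simp add: algebra_simps)
qed

lemma abs_diff_le_in_intr_ball: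
  assumes "x \<in> \<Omega>" "y \<in> intr_ball \<Omega> x \<epsilon>" "\<epsilon> \<le> 1" "2 * \<epsilon> \<le> r" "r \<le> infdist x (frontier \<Omega>)"
    and "\<And>z. z \<in> closure \<Omega> \<Longrightarrow> \<bar>w z\<bar> \<le> M"
  shows "\<bar>w x - w y\<bar> \<le> (4 * M / r + r * F + 1 + F) * \<epsilon>"
proof -
  have "\<epsilon>\<^sup>2 \<le> \<epsilon>" using assms(3) eps_pos by (simp add: power2_eq_square mult_left_le_one_le)
  then have "\<epsilon>\<^sup>2 * F \<le> \<epsilon> * F" using F_nonneg by (rule mult_right_mono)
  moreover have "0 \<le> \<epsilon>\<^sup>2 * F" using F_nonneg by simp
  ultimately show ?thesis
    using drop_le_ascent[OF assms(1,2)] rise_le_ascent[OF assms(2)] ascent_le[OF assms(1,4-6)]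
    by (simp add: abs_le_iff algebra_simps)
qed

end

section \<open>A barrier and the uniform bound\<close>

locale eps_subsolution_bounded_width = eps_subsolution +
  fixes W G :: real
  assumes frontier_nonempty: "frontier \<Omega> \<noteq> {}" and eps_le_1: "\<epsilon> \<le> 1"
    and infdist_le_W: "\<And>x. x \<in> \<Omega> \<Longrightarrow> infdist x (frontier \<Omega>) \<le> W"
    and le_G_on_frontier: "\<And>x. x \<in> frontier \<Omega> \<Longrightarrow> w x \<le> G"
begin

definition profile :: "real \<Rightarrow> real" where
  "profile t = (F + 1) * ((2 * W + 4) * t - t\<^sup>2)"

definition barrier :: "'a \<Rightarrow> real" where
  "barrier z = G + profile (infdist z (frontier \<Omega>))"

lemma W_nonneg: "0 \<le> W"
proof -
  obtain x where "x \<in> \<Omega>" using frontier_nonempty by fastforce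
  then show ?thesis using infdist_le_W infdist_nonneg order_trans by blast
qed

lemma infdist_le_W_closure:
  assumes "z \<in> closure \<Omega>"
  shows "infdist z (frontier \<Omega>) \<le> W"
proof (cases "z \<in> \<Omega>")
  case False
  then have "z \<in> frontier \<Omega>" using assms interior_subset by (auto simp: frontier_def)
  then show ?thesis using W_nonneg by simp
qed (rule infdist_le_W)

lemma profile_mono: "0 \<le> s \<Longrightarrow> s \<le> t \<Longrightarrow> t \<le> W + 2 \<Longrightarrow> profile s \<le> profile t"
proof -
  assume "0 \<le> s" "s \<le> t" "t \<le> W + 2"
  then have "0 \<le> (t - s) * (2 * W + 4 - t - s)" by (intro mult_nonneg_nonneg) auto
  then have "(2 * W + 4) * s - s\<^sup>2 \<le> (2 * W + 4) * t - t\<^sup>2" by (simp add: power2_eq_square algebra_simps)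
  then show ?thesis unfolding profile_def using F_nonneg by (simp add: mult_left_mono)
qed

lemma profile_le: "profile t \<le> (F + 1) * (2 * W + 4) * t"
proof -
  have "(F + 1) * t\<^sup>2 \<ge> 0" using F_nonneg by simp
  then show ?thesis unfolding profile_def by (simp add: right_diff_distrib mult.assoc)
qed

lemma barrier_frontier: "z \<in> frontier \<Omega> \<Longrightarrow> barrier z = G"
  by (simp add: barrier_def profile_def infdist_zero)

lemma barrier_ge: "z \<in> closure \<Omega> \<Longrightarrow> G \<le> barrier z"
  using profile_mono[of 0 "infdist z (frontier \<Omega>)"] infdist_le_W_closure[of z] infdist_nonneg[of z]
  by (simp add: barrier_def profile_def)

lemma barrier_le: "z \<in> closure \<Omega> \<Longrightarrow> barrier z \<le> G + (F + 1) * (2 * W + 4) * W"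
proof -
  assume "z \<in> closure \<Omega>"
  have "(F + 1) * (2 * W + 4) * infdist z (frontier \<Omega>) \<le> (F + 1) * (2 * W + 4) * W"
    using infdist_le_W_closure[OF \<open>z \<in> closure \<Omega>\<close>] F_nonneg W_nonneg by (intro mult_left_mono) auto
  then show ?thesis using profile_le[of "infdist z (frontier \<Omega>)"] by (simp add: barrier_def)
qed

lemma barrier_intr_ball_le:
  assumes "x \<in> closure \<Omega>" "z \<in> intr_ball \<Omega> x \<epsilon>"
  shows "barrier z \<le> G + profile (infdist x (frontier \<Omega>) + \<epsilon>)"
  using profile_mono[OF infdist_nonneg less_imp_le[OF infdist_frontier_intr_ball_less[OF assms(2)]]]
    infdist_le_W_closure[OF assms(1)] eps_le_1
  by (simp add: barrier_def)

lemma SUP_intr_ball_le_barrier: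
  assumes le: "\<forall>z\<in>closure \<Omega>. w z \<le> barrier z + m" and x: "x \<in> closure \<Omega>"
  shows "(SUP z\<in>intr_ball \<Omega> x \<epsilon>. w z) \<le> G + profile (infdist x (frontier \<Omega>) + \<epsilon>) + m"
proof (rule cSUP_least)
  show "intr_ball \<Omega> x \<epsilon> \<noteq> {}" using center_in_intr_ball[OF x eps_pos] by blast
  fix z assume "z \<in> intr_ball \<Omega> x \<epsilon>"
  then show "w z \<le> G + profile (infdist x (frontier \<Omega>) + \<epsilon>) + m"
    using le barrier_intr_ball_le[OF x] intr_ball_subset_closure by fastforce
qed

lemma near_max_near_frontier:
  assumes le: "\<forall>z\<in>closure \<Omega>. w z \<le> barrier z + m"
    and x: "x \<in> \<Omega>" "barrier x + m - \<epsilon>\<^sup>2 / 4 < w x"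
  shows "infdist x (frontier \<Omega>) < \<epsilon>"
proof (rule ccontr)
  define e where "e = infdist x (frontier \<Omega>)"
  define K where "K = F + 1"
  define a where "a = 2 * W + 4"
  define \<eta> where "\<eta> = \<epsilon>\<^sup>2 / (2 * K * a)"
  assume "\<not> infdist x (frontier \<Omega>) < \<epsilon>"
  then have e: "\<epsilon> \<le> e" by (simp add: e_def)
  have K: "1 \<le> K" and a: "4 \<le> a" using F_nonneg W_nonneg by (simp_all add: K_def a_def)
  have Ka\<eta>: "K * a * \<eta> = \<epsilon>\<^sup>2 / 2" using K a by (simp add: \<eta>_def)
  have "4 \<le> K * a" using K a mult_mono[of 1 K 4 a] by simp
  then have "\<epsilon> * \<epsilon> < 2 * K * a * \<epsilon>" using eps_pos eps_le_1 by simp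
  then have \<eta>: "0 < \<eta>" "\<eta> < \<epsilon>" using K a eps_pos by (simp_all add: \<eta>_def field_simps power2_eq_square)
  \<comment> \<open>Step \<open>\<epsilon> - \<eta>\<close> towards the boundary: the first-order part \<open>a * \<eta>\<close> of the second difference
    of the concave profile then costs only \<open>\<epsilon>\<^sup>2 / (2 * K)\<close>.\<close>
  obtain y where y: "y \<in> intr_ball \<Omega> x \<epsilon>" "infdist y (frontier \<Omega>) \<le> e - (\<epsilon> - \<eta>)"
    using exists_intr_ball_point_closer_to_frontier[OF frontier_nonempty x(1), of "\<epsilon> - \<eta>" \<epsilon>] \<eta> e
    unfolding e_def by auto
  have "e \<le> W" using infdist_le_W[OF x(1)] by (simp add: e_def)
  then have "profile (infdist y (frontier \<Omega>)) \<le> profile (e - (\<epsilon> - \<eta>))"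
    using y(2) \<eta> by (intro profile_mono infdist_nonneg) auto
  then have "(INF z\<in>intr_ball \<Omega> x \<epsilon>. w z) \<le> G + profile (e - (\<epsilon> - \<eta>)) + m"
    using INF_intr_ball_le[OF y(1)] bspec[OF le, of y] y(1) intr_ball_subset_closure
    by (force simp: barrier_def)
  moreover have "(SUP z\<in>intr_ball \<Omega> x \<epsilon>. w z) \<le> G + profile (e + \<epsilon>) + m"
    using SUP_intr_ball_le_barrier[OF le] x(1) closure_subset by (auto simp: e_def)
  moreover have "profile (e - (\<epsilon> - \<eta>)) + profile (e + \<epsilon>) - 2 * profile e
      = K * (a * \<eta> - 2 * \<epsilon>\<^sup>2 - 2 * (e - \<epsilon>) * \<eta> - \<eta>\<^sup>2)"
    by (simp add: profile_def K_def a_def power2_eq_square algebra_simps)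
  moreover have "0 \<le> K * (2 * (e - \<epsilon>) * \<eta> + \<eta>\<^sup>2)" using K e \<eta> by simp
  ultimately have "eps_inf_laplacian \<Omega> \<epsilon> w x < \<epsilon>\<^sup>2 - 2 * K * \<epsilon>\<^sup>2"
    using x(2) Ka\<eta> unfolding eps_inf_laplacian_def barrier_def e_def
    by (simp add: algebra_simps)
  moreover have "\<epsilon>\<^sup>2 - 2 * K * \<epsilon>\<^sup>2 = - \<epsilon>\<^sup>2 * F - \<epsilon>\<^sup>2 * K" by (simp add: K_def algebra_simps)
  moreover have "0 < \<epsilon>\<^sup>2 * K" using eps_pos K by simp
  ultimately show False using laplacian_ge[OF x(1)] by linarith
qed

lemma near_max_bound:
  assumes le: "\<forall>z\<in>closure \<Omega>. w z \<le> barrier z + m"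
    and x: "x \<in> \<Omega>" "barrier x + m - \<epsilon>\<^sup>2 / 4 < w x" and near: "infdist x (frontier \<Omega>) < \<epsilon>"
  shows "m \<le> 2 * (F + 1) * (2 * W + 4) + F + 1"
proof -
  obtain b where b: "b \<in> intr_ball \<Omega> x \<epsilon>"
    "infdist b (frontier \<Omega>) \<le> infdist x (frontier \<Omega>) - infdist x (frontier \<Omega>)"
    by (rule exists_intr_ball_point_closer_to_frontier[OF frontier_nonempty x(1) infdist_nonneg order_refl near])
  then have "infdist b (frontier \<Omega>) = 0" using infdist_nonneg[of b "frontier \<Omega>"] by linarith
  then have "b \<in> frontier \<Omega>" using in_closed_iff_infdist_zero[OF frontier_closed frontier_nonempty] by blast
  then have "(INF z\<in>intr_ball \<Omega> x \<epsilon>. w z) \<le> G"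
    using INF_intr_ball_le[OF b(1)] le_G_on_frontier by (meson order_trans)
  moreover have "(SUP z\<in>intr_ball \<Omega> x \<epsilon>. w z) \<le> G + profile (infdist x (frontier \<Omega>) + \<epsilon>) + m"
    using x(1) closure_subset by (intro SUP_intr_ball_le_barrier[OF le]) blast
  moreover have "profile (infdist x (frontier \<Omega>) + \<epsilon>) \<le> profile 2"
    using near eps_le_1 W_nonneg eps_pos infdist_nonneg[of x "frontier \<Omega>"]
    by (intro profile_mono) simp_all
  moreover have "profile 2 \<le> 2 * (F + 1) * (2 * W + 4)" using profile_le[of 2] by (simp add: algebra_simps)
  moreover have "G \<le> barrier x" using barrier_ge x(1) closure_subset by blast
  moreover have "\<epsilon>\<^sup>2 \<le> 1" using eps_pos eps_le_1 by (simp add: power_le_one)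
  then have "\<epsilon>\<^sup>2 * F \<le> F" using F_nonneg by (simp add: mult_left_le_one_le)
  ultimately show ?thesis
    using laplacian_ge[OF x(1)] x(2) \<open>\<epsilon>\<^sup>2 \<le> 1\<close> unfolding eps_inf_laplacian_def by linarith
qed

lemma upper_bound:
  assumes "z \<in> closure \<Omega>"
  shows "w z \<le> G + 2 * (F + 1) * (W + 2)\<^sup>2 + F + 1"
proof -
  define m where "m = (SUP z\<in>closure \<Omega>. w z - barrier z)"
  obtain M where "\<And>z. z \<in> closure \<Omega> \<Longrightarrow> w z \<le> M"
    using bounded_imp_bdd_above[OF bounded_w] by (auto simp: bdd_above_def)
  then have "bdd_above ((\<lambda>z. w z - barrier z) ` closure \<Omega>)"
    using barrier_ge by (intro bdd_aboveI2[where M="M - G"]) force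
  then have le: "\<forall>z\<in>closure \<Omega>. w z \<le> barrier z + m"
    using cSUP_upper[OF _ \<open>bdd_above _\<close>] unfolding m_def by fastforce
  have "closure \<Omega> \<noteq> {}" using assms by auto
  moreover have "m - \<epsilon>\<^sup>2 / 4 < m" using eps_pos by simp
  ultimately obtain x where x: "x \<in> closure \<Omega>" "m - \<epsilon>\<^sup>2 / 4 < w x - barrier x"
    using less_cSUP_iff[OF _ \<open>bdd_above _\<close>] unfolding m_def by blast
  then have x: "x \<in> closure \<Omega>" "barrier x + m - \<epsilon>\<^sup>2 / 4 < w x" by simp_all
  have "m \<le> 2 * (F + 1) * (2 * W + 4) + F + 1"
  proof (cases "x \<in> \<Omega>")
    case True
    show ?thesis by (rule near_max_bound[OF le True x(2) near_max_near_frontier[OF le True x(2)]])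
  next
    case False
    then have "x \<in> frontier \<Omega>" using x(1) interior_subset by (auto simp: frontier_def)
    then have "m < \<epsilon>\<^sup>2 / 4" using x(2) barrier_frontier le_G_on_frontier by fastforce
    moreover have "\<epsilon>\<^sup>2 \<le> 1" using eps_pos eps_le_1 by (simp add: power_le_one)
    moreover have "0 \<le> (F + 1) * (2 * W + 4)" using F_nonneg W_nonneg by simp
    ultimately show ?thesis using F_nonneg by linarith
  qed
  moreover have "(F + 1) * (2 * W + 4) * W + 2 * (F + 1) * (2 * W + 4) = 2 * (F + 1) * (W + 2)\<^sup>2"
    by (simp add: power2_eq_square algebra_simps)
  ultimately show ?thesis using bspec[OF le assms] barrier_le[OF assms] by linarith
qed

end

lemma eps_subsolution_if_solution:
  fixes \<Omega> :: "'a::euclidean_space set" and w \<phi> :: "'a \<Rightarrow> real"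
  assumes eps: "0 < \<epsilon>" and F: "0 \<le> F" and bdd: "bounded (w ` closure \<Omega>)"
    and eq: "\<And>x. x \<in> \<Omega> \<Longrightarrow> eps_inf_laplacian \<Omega> \<epsilon> w x = \<epsilon>\<^sup>2 * \<phi> x"
    and \<phi>: "\<And>x. x \<in> \<Omega> \<Longrightarrow> \<bar>\<phi> x\<bar> \<le> F"
  shows "eps_subsolution \<Omega> \<epsilon> F w" "eps_subsolution \<Omega> \<epsilon> F (\<lambda>x. - w x)"
proof -
  have "- \<epsilon>\<^sup>2 * F \<le> \<epsilon>\<^sup>2 * \<phi> x \<and> \<epsilon>\<^sup>2 * \<phi> x \<le> \<epsilon>\<^sup>2 * F" if "x \<in> \<Omega>" for x
    using \<phi>[OF that] mult_left_mono[of "\<phi> x" F "\<epsilon>\<^sup>2"] mult_left_mono[of "- F" "\<phi> x" "\<epsilon>\<^sup>2"]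
    by (simp add: abs_le_iff)
  moreover have "eps_inf_laplacian \<Omega> \<epsilon> (\<lambda>y. - w y) x = - (\<epsilon>\<^sup>2 * \<phi> x)" if "x \<in> \<Omega>" for x
  proof -
    have "x \<in> closure \<Omega>" using that closure_subset by blast
    then show ?thesis using eps_inf_laplacian_uminus[OF bdd _ eps] eq[OF that] by simp
  qed
  ultimately show "eps_subsolution \<Omega> \<epsilon> F w" "eps_subsolution \<Omega> \<epsilon> F (\<lambda>x. - w x)"
    using eps F bdd eq by (unfold_locales; force)+
qed

lemma eps_inf_solution_abs_le:
  fixes \<Omega> :: "'a::euclidean_space set" and w \<phi> :: "'a \<Rightarrow> real"
  assumes "0 < \<epsilon>" "\<epsilon> \<le> 1" "0 \<le> F" "bounded (w ` closure \<Omega>)"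
    and "\<And>x. x \<in> \<Omega> \<Longrightarrow> eps_inf_laplacian \<Omega> \<epsilon> w x = \<epsilon>\<^sup>2 * \<phi> x" "\<And>x. x \<in> \<Omega> \<Longrightarrow> \<bar>\<phi> x\<bar> \<le> F"
    and "frontier \<Omega> \<noteq> {}" "\<And>x. x \<in> \<Omega> \<Longrightarrow> infdist x (frontier \<Omega>) \<le> W"
    and "\<And>x. x \<in> frontier \<Omega> \<Longrightarrow> \<bar>w x\<bar> \<le> G" and "z \<in> closure \<Omega>"
  shows "\<bar>w z\<bar> \<le> G + 2 * (F + 1) * (W + 2)\<^sup>2 + F + 1"
proof -
  interpret pos: eps_subsolution_bounded_width \<Omega> \<epsilon> F w W G
    using eps_subsolution_if_solution(1)[OF assms(1,3-6)] assms(2,7-9)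
    by (simp add: eps_subsolution_bounded_width_def eps_subsolution_bounded_width_axioms_def abs_le_iff)
  interpret neg: eps_subsolution_bounded_width \<Omega> \<epsilon> F "\<lambda>x. - w x" W G
    using eps_subsolution_if_solution(2)[OF assms(1,3-6)] assms(2,7-9)
    by (simp add: eps_subsolution_bounded_width_def eps_subsolution_bounded_width_axioms_def abs_le_iff)
  show ?thesis using pos.upper_bound[OF assms(10)] neg.upper_bound[OF assms(10)] by (simp add: abs_le_iff)
qed

theorem lemma5p2:
  fixes \<Omega> :: "'a::euclidean_space set"
    and f :: "'a \<Rightarrow> real" and g :: "'a \<Rightarrow> real"
    and \<epsilon> :: "nat \<Rightarrow> real" and u :: "nat \<Rightarrow> 'a \<Rightarrow> real"
  assumes dom: "open \<Omega>" "connected \<Omega>" "\<Omega> \<noteq> {}"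
    and wid: "width \<Omega> < \<infinity>"
    and f_meas: "f \<in> borel_measurable (lebesgue_on \<Omega>)"
    and f_bdd: "bounded (f ` \<Omega>)"
    and g_cont: "continuous_on (frontier \<Omega>) g"
    and g_bdd: "bounded (g ` frontier \<Omega>)"
    and eps_pos: "\<And>i. \<epsilon> i > 0"
    and eps_lim: "\<epsilon> \<longlonglongrightarrow> 0"
    and u_bdd: "\<And>i. bounded (u i ` closure \<Omega>)"
    and u_eq: "\<And>i x. x \<in> \<Omega> \<Longrightarrow> eps_inf_laplacian \<Omega> (\<epsilon> i) (u i) x = (\<epsilon> i)\<^sup>2 * f x"
    and u_bd: "\<And>i x. x \<in> frontier \<Omega> \<Longrightarrow> u i x = g x"
  shows "\<forall>r>0. \<exists>N::nat. \<exists>C::real. \<forall>i>N. \<forall>x\<in>inner_set \<Omega> r. \<forall>y\<in>inner_set \<Omega> r.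
           intrinsic_dist \<Omega> x y < ereal (\<epsilon> i) \<longrightarrow> \<bar>u i x - u i y\<bar> \<le> C * \<epsilon> i"
proof (intro allI impI)
  fix r :: real assume "0 < r"
  obtain W where fne: "frontier \<Omega> \<noteq> {}" and W: "\<And>x. x \<in> \<Omega> \<Longrightarrow> infdist x (frontier \<Omega>) \<le> W"
    using infdist_frontier_bounded_if_width_finite[OF dom(3) wid] by blast
  obtain F where F: "\<And>x. x \<in> \<Omega> \<Longrightarrow> \<bar>f x\<bar> \<le> F" using f_bdd by (auto simp: bounded_iff)
  then have "0 \<le> F" using dom(3) by (meson abs_ge_zero ex_in_conv order_trans)
  obtain G where G: "\<And>i x. x \<in> frontier \<Omega> \<Longrightarrow> \<bar>u i x\<bar> \<le> G"
    using g_bdd u_bd by (auto simp: bounded_iff)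
  define M where "M = G + 2 * (F + 1) * (W + 2)\<^sup>2 + F + 1"
  have M: "\<bar>u i z\<bar> \<le> M" if "\<epsilon> i \<le> 1" "z \<in> closure \<Omega>" for i z
    unfolding M_def using eps_pos that fne W G \<open>0 \<le> F\<close> F u_bdd u_eq
    by (intro eps_inf_solution_abs_le[of "\<epsilon> i" F "u i" \<Omega> f W G z])
  have "\<forall>\<^sub>F i in sequentially. \<epsilon> i < min 1 (r / 2)"
    using eps_lim \<open>0 < r\<close> by (intro order_tendstoD(2)) auto
  then obtain N where N: "\<And>i. N \<le> i \<Longrightarrow> \<epsilon> i \<le> 1 \<and> 2 * \<epsilon> i \<le> r"
    unfolding eventually_sequentially by force
  have "\<bar>u i x - u i y\<bar> \<le> (4 * M / r + r * F + 1 + F) * \<epsilon> i"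
    if "N < i" "x \<in> inner_set \<Omega> r" "y \<in> inner_set \<Omega> r" "intrinsic_dist \<Omega> x y < ereal (\<epsilon> i)"
    for i x y
  proof (rule eps_subsolution.abs_diff_le_in_intr_ball[where w = "u i"])
    show "eps_subsolution \<Omega> (\<epsilon> i) F (u i)"
      by (rule eps_subsolution_if_solution(1)[OF eps_pos \<open>0 \<le> F\<close> u_bdd u_eq F])
    show "x \<in> \<Omega>" "y \<in> intr_ball \<Omega> x (\<epsilon> i)"
      using that closure_subset by (auto simp: inner_set_def intr_ball_def)
    show "r \<le> infdist x (frontier \<Omega>)" using infdist_frontier_gt_if_inner_set[OF fne that(2)] by simp
  qed (use that N[of i] M in auto)
  then show "\<exists>N C. \<forall>i>N. \<forall>x\<in>inner_set \<Omega> r. \<forall>y\<in>inner_set \<Omega> r.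
      intrinsic_dist \<Omega> x y < ereal (\<epsilon> i) \<longrightarrow> \<bar>u i x - u i y\<bar> \<le> C * \<epsilon> i"
    by blast
qed

end
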